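(* Let $\Phi\in\mathcal{C}^2(\mathbb{R}^d)$ be bounded below and satisfy $x\cdot\nabla\Phi(x)\ge\gamma_1|x|^2+\gamma_2\Phi(x)-A$ for all $x\in\mathbb{R}^d$, for some positive constants $\gamma_1,\gamma_2,A$. Let \[V(x,v)=1+\Phi(x)+\tfrac12|v|^2+\tfrac14x\cdot v+\tfrac18|x|^2.\] Then there exist $\lambda>0$ and $K\ge0$ such that $\mathcal{U}V\le-\lambda V+K$, where $\mathcal{U}\phi=v\cdot\nabla_x\phi-\nabla_x\Phi\cdot\nabla_v\phi+\mathcal{L}^*\phi$ and $\mathcal{L}^*\phi(x,v)=\int_{\mathbb{R}^d}\phi(x,u)\mathcal{M}(u)\,\mathrm{d}u-\phi(x,v)$. Consequently, for every $t_*>0$, the Markov semigroup $(\mathcal{P}_t)$ of the linear relaxation Boltzmann equation $\partial_tf+v\cdot\nabla_xf-\nabla\Phi\cdot\nabla_vf=(\int f\,\mathrm{d}u)\mathcal{M}-f$ satisfies $\int Vf_{t_*}\le e^{-\lambda t_*}\int Vf_0+K/\lambda$ for all initial probability measures $f_0$ (i.e. $\mathcal{P}^*_{t_*}V\le e^{-\lambda t_*}V+K/\lambda$).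
   Context: $\mathcal{M}(v)=(2\pi)^{-d/2}e^{-|v|^2/2}$. $\mathcal{P}^*_t$ denotes the dual action of the semigroup on observables, $(\mathcal{P}^*_t\psi)(z)=\int\psi(y)S_t(z,\mathrm{d}y)$ with $S_t$ the transition kernel; $\mathcal{U}$ is its generator (forwards operator). *)

theory Defs
  imports "HOL-Analysis.Analysis"
begin

definition Maxw :: "'a::euclidean_space \<Rightarrow> real" where
  "Maxw u = (2 * pi) powr (- real DIM('a) / 2) * exp (- (norm u * norm u) / 2)"

definition Lstar :: "('a::euclidean_space \<times> 'a \<Rightarrow> real) \<Rightarrow> 'a \<times> 'a \<Rightarrow> real" where
  "Lstar \<phi> = (\<lambda>(x, v). (\<integral>u. \<phi> (x, u) * Maxw u \<partial>lborel) - \<phi> (x, v))"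

text \<open>U phi = v . grad_x phi - grad Phi . grad_v phi + L* phi; the transport part is the
  Frechet derivative of phi at (x,v) in direction (v, - grad Phi x).\<close>
definition Ugen :: "('a::euclidean_space \<Rightarrow> 'a) \<Rightarrow> ('a \<times> 'a \<Rightarrow> real) \<Rightarrow> 'a \<times> 'a \<Rightarrow> real" where
  "Ugen gradPhi \<phi> = (\<lambda>(x, v). frechet_derivative \<phi> (at (x, v)) (v, - gradPhi x) + Lstar \<phi> (x, v))"

definition is_flow :: "('a::euclidean_space \<Rightarrow> 'a) \<Rightarrow> (real \<Rightarrow> 'a \<times> 'a \<Rightarrow> 'a \<times> 'a) \<Rightarrow> bool" where
  "is_flow gradPhi \<Psi> \<longleftrightarrow> (\<forall>z. \<Psi> 0 z = z \<and>
     (\<forall>t\<ge>0. ((\<lambda>s. \<Psi> s z) has_vector_derivative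
               (snd (\<Psi> t z), - gradPhi (fst (\<Psi> t z)))) (at t within {0..})))"

text \<open>Dyson (Duhamel) series terms for the dual semigroup: jumps at rate 1 to a fresh
  velocity drawn from M, deterministic flow Psi in between.\<close>
primrec dyson :: "(real \<Rightarrow> 'a \<times> 'a \<Rightarrow> 'a \<times> 'a) \<Rightarrow> nat \<Rightarrow> real \<Rightarrow> ('a::euclidean_space \<times> 'a \<Rightarrow> ennreal)
    \<Rightarrow> 'a \<times> 'a \<Rightarrow> ennreal" where
  "dyson \<Psi> 0 = (\<lambda>t \<phi> z. \<phi> (\<Psi> t z))"
| "dyson \<Psi> (Suc n) = (\<lambda>t \<phi> z.
     \<integral>\<^sup>+ s \<in> {0..t}. (\<integral>\<^sup>+ u. dyson \<Psi> n (t - s) \<phi> (fst (\<Psi> s z), u) * ennreal (Maxw u) \<partial>lborel) \<partial>lborel)"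

definition Pplus :: "(real \<Rightarrow> 'a \<times> 'a \<Rightarrow> 'a \<times> 'a) \<Rightarrow> real \<Rightarrow> ('a::euclidean_space \<times> 'a \<Rightarrow> ennreal)
    \<Rightarrow> 'a \<times> 'a \<Rightarrow> ennreal" where
  "Pplus \<Psi> t \<phi> z = ennreal (exp (- t)) * (\<Sum>n. dyson \<Psi> n t \<phi> z)"

definition Pdual :: "(real \<Rightarrow> 'a \<times> 'a \<Rightarrow> 'a \<times> 'a) \<Rightarrow> real \<Rightarrow> ('a::euclidean_space \<times> 'a \<Rightarrow> real)
    \<Rightarrow> 'a \<times> 'a \<Rightarrow> real" where
  "Pdual \<Psi> t \<phi> z = enn2real (Pplus \<Psi> t (\<lambda>y. ennreal (\<phi> y)) z)
                    - enn2real (Pplus \<Psi> t (\<lambda>y. ennreal (- \<phi> y)) z)"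

end

theory Submission
  imports Defs "HOL-Probability.Distributions"
begin

(* The Maxwellian has mean zero and unit covariance, so averaging V over the velocity replaces
   |v|^2/2 by d/2 and kills x.v/4; the transport part of U V is |v|^2/4 - x.grad Phi/4 + x.v/4.
   Hence U V = d/2 - |v|^2/4 - x.grad Phi/4, and the drift condition together with
   2|x.v| <= |x|^2 + |v|^2 bounds this by -lam V + K.

   For the semigroup, w(t, y) = exp(-lam t) y + K/lam (1 - exp(-lam t)) solves w' = -lam w + K.
   Differentiating exp(-s) w(t - s, V(psi_s z)) along the characteristics and using U V <= -lam V + K
   shows that w(t, V z) is a supersolution of the Duhamel form of the dual equation: jumps at
   rate 1 to a Maxwellian velocity, free flow in between. By induction, every partial sum of the
   Dyson series for P*_t V is bounded by it. As V may be negative, the argument is applied to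
   V + m with m >= - inf Phi; the shift leaves U V unchanged and costs an additive constant. *)

subsection \<open>Superadditivity of the nonnegative integral\<close>

(* The flow is not assumed measurable in its initial point, so the integrands of the Dyson
   series need not be measurable; these one-sided forms of nn_integral_cmult, nn_integral_add
   and nn_integral_sum hold without measurability. *)

lemma nn_integral_cmult_le: "c * integral\<^sup>N M f \<le> (\<integral>\<^sup>+x. c * f x \<partial>M)"
  unfolding nn_integral_def SUP_mult_left_ennreal
proof (rule SUP_least)
  fix g assume g: "g \<in> {g. simple_function M g \<and> g \<le> f}"
  then have "c * integral\<^sup>S M g = integral\<^sup>S M (\<lambda>x. c * g x)" by simp
  also have "\<dots> \<le> (SUP g \<in> {g. simple_function M g \<and> g \<le> (\<lambda>x. c * f x)}. integral\<^sup>S M g)"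
    using g by (intro SUP_upper) (auto simp: le_fun_def intro: mult_left_mono)
  finally show "c * integral\<^sup>S M g \<le> \<dots>" .
qed

lemma nn_integral_add_le: "integral\<^sup>N M f + integral\<^sup>N M g \<le> (\<integral>\<^sup>+x. f x + g x \<partial>M)"
proof -
  let ?S = "\<lambda>f. {g. simple_function M g \<and> g \<le> f}"
  have ne: "?S h \<noteq> {}" for h :: "_ \<Rightarrow> ennreal"
  proof -
    have "(\<lambda>_. 0) \<in> ?S h" by (auto simp: le_fun_def)
    then show ?thesis by blast
  qed
  have "integral\<^sup>N M f + integral\<^sup>N M g = (SUP b\<in>?S g. SUP a\<in>?S f. integral\<^sup>S M a + integral\<^sup>S M b)"
    unfolding nn_integral_def
    by (simp add: ennreal_SUP_add_left[OF ne, symmetric] ennreal_SUP_add_right[OF ne])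
  also have "\<dots> \<le> (\<integral>\<^sup>+x. f x + g x \<partial>M)"
  proof (intro SUP_least)
    fix b a assume b: "b \<in> ?S g" and a: "a \<in> ?S f"
    then have "integral\<^sup>S M a + integral\<^sup>S M b = integral\<^sup>S M (\<lambda>x. a x + b x)" by simp
    also have "\<dots> \<le> (\<integral>\<^sup>+x. f x + g x \<partial>M)" unfolding nn_integral_def
      using a b by (intro SUP_upper) (auto simp: le_fun_def intro: add_mono)
    finally show "integral\<^sup>S M a + integral\<^sup>S M b \<le> (\<integral>\<^sup>+x. f x + g x \<partial>M)" .
  qed
  finally show ?thesis .
qed

lemma nn_integral_sum_le:
  "finite I \<Longrightarrow> (\<Sum>i\<in>I. integral\<^sup>N M (f i)) \<le> (\<integral>\<^sup>+x. (\<Sum>i\<in>I. f i x) \<partial>M)"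
proof (induction I rule: finite_induct)
  case (insert i I)
  have "(\<Sum>i\<in>insert i I. integral\<^sup>N M (f i)) = integral\<^sup>N M (f i) + (\<Sum>i\<in>I. integral\<^sup>N M (f i))"
    using insert by simp
  also have "\<dots> \<le> integral\<^sup>N M (f i) + (\<integral>\<^sup>+x. (\<Sum>i\<in>I. f i x) \<partial>M)"
    using insert by (intro add_left_mono)
  also have "\<dots> \<le> (\<integral>\<^sup>+x. f i x + (\<Sum>i\<in>I. f i x) \<partial>M)" by (rule nn_integral_add_le)
  finally show ?case using insert by simp
qed simp

subsection \<open>Moments of the Maxwellian\<close>

lemma lborel_integrable_prod_Basis:
  fixes h :: "'a::euclidean_space \<Rightarrow> real \<Rightarrow> real"
  assumes h: "\<And>b. b \<in> Basis \<Longrightarrow> integrable lborel (h b)"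
  shows "integrable (lborel::'a measure) (\<lambda>u. \<Prod>b\<in>Basis. h b (u \<bullet> b))"
    and lborel_integral_prod_Basis:
      "(\<integral>u. (\<Prod>b\<in>Basis. h b (u \<bullet> b)) \<partial>(lborel::'a measure)) = (\<Prod>b\<in>Basis. \<integral>x. h b x \<partial>lborel)"
proof -
  interpret product_sigma_finite "\<lambda>_::'a. lborel::real measure" by standard
  have meas: "(\<lambda>f. \<Sum>b\<in>Basis. f b *\<^sub>R b) \<in> measurable (Pi\<^sub>M Basis (\<lambda>_. lborel)) (borel::'a measure)"
    by measurable
  have hm: "b \<in> Basis \<Longrightarrow> h b \<in> borel_measurable borel" for b
    using h[of b] by (simp add: borel_measurable_integrable)
  have gm: "(\<lambda>u::'a. \<Prod>b\<in>Basis. h b (u \<bullet> b)) \<in> borel_measurable borel"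
    by (intro borel_measurable_prod measurable_compose[OF _ hm]) auto
  have eq: "(\<Prod>b\<in>Basis. h b ((\<Sum>b\<in>Basis. f b *\<^sub>R b) \<bullet> b)) = (\<Prod>b\<in>Basis. h b (f b))" for f
    by (intro prod.cong refl) (simp add: inner_sum_left inner_Basis if_distrib sum.delta cong: if_cong)
  have "integrable (Pi\<^sub>M Basis (\<lambda>_. lborel)) (\<lambda>f. \<Prod>b\<in>Basis. h b (f b))"
    by (intro product_integrable_prod h) auto
  then show "integrable (lborel::'a measure) (\<lambda>u. \<Prod>b\<in>Basis. h b (u \<bullet> b))"
    by (subst lborel_eq, subst integrable_distr_eq[OF meas gm]) (simp add: eq)
  have "(\<integral>u. (\<Prod>b\<in>Basis. h b (u \<bullet> b)) \<partial>(lborel::'a measure))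
     = (\<integral>f. (\<Prod>b\<in>Basis. h b ((\<Sum>b\<in>Basis. f b *\<^sub>R b) \<bullet> b)) \<partial>(Pi\<^sub>M Basis (\<lambda>_. lborel)))"
    by (subst lborel_eq, subst integral_distr[OF meas gm]) simp
  also have "\<dots> = (\<Prod>b\<in>Basis. \<integral>x. h b x \<partial>lborel)"
    unfolding eq by (intro product_integral_prod h) auto
  finally show "(\<integral>u. (\<Prod>b\<in>Basis. h b (u \<bullet> b)) \<partial>(lborel::'a measure)) = (\<Prod>b\<in>Basis. \<integral>x. h b x \<partial>lborel)" .
qed

lemma Maxw_eq_prod_std_normal_density:
  "Maxw (u::'a::euclidean_space) = (\<Prod>b\<in>Basis. std_normal_density (u \<bullet> b))"
proof -
  have "norm u * norm u = u \<bullet> u"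
    by (simp add: power2_norm_eq_inner[symmetric] power2_eq_square)
  then have norm_sq: "norm u * norm u = (\<Sum>b\<in>Basis. (u \<bullet> b)\<^sup>2)"
    by (simp add: euclidean_inner[of u u] power2_eq_square)
  have const: "(2 * pi) powr (- real DIM('a) / 2) = (1 / sqrt (2 * pi)) ^ DIM('a)"
    by (simp add: powr_minus_divide powr_half_sqrt[symmetric] powr_realpow[symmetric] powr_powr
        power_one_over divide_inverse[symmetric])
  show ?thesis
    unfolding Maxw_def std_normal_density_def prod.distrib norm_sq const
    by (simp add: exp_sum[symmetric] sum_negf sum_divide_distrib)
qed

lemma Maxw_nonneg: "0 \<le> Maxw u"
  by (simp add: Maxw_def)

lemma integrable_Maxw: "integrable lborel (Maxw :: 'a::euclidean_space \<Rightarrow> real)"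
  and integral_Maxw: "(\<integral>u. Maxw u \<partial>(lborel::'a measure)) = 1"
  using lborel_integrable_prod_Basis[of "\<lambda>_. std_normal_density"]
    lborel_integral_prod_Basis[of "\<lambda>_. std_normal_density"]
  by (simp_all add: Maxw_eq_prod_std_normal_density[abs_def])

lemma integrable_coordinate_Maxw:
  fixes b0 :: "'a::euclidean_space"
  assumes b0: "b0 \<in> Basis" and g: "integrable lborel (\<lambda>x. std_normal_density x * g x)"
  shows "integrable lborel (\<lambda>u::'a. g (u \<bullet> b0) * Maxw u)"
    and integral_coordinate_Maxw: "(\<integral>u. g (u \<bullet> b0) * Maxw (u::'a) \<partial>lborel) = (\<integral>x. std_normal_density x * g x \<partial>lborel)"
proof -
  define h where "h b = (if b = b0 then (\<lambda>x. std_normal_density x * g x) else std_normal_density)" for b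
  have h_int: "integrable lborel (h b)" for b
    using g by (simp add: h_def)
  have h_rest: "(\<Prod>b\<in>Basis - {b0}. h b (y b)) = (\<Prod>b\<in>Basis - {b0}. std_normal_density (y b))" for y
    by (rule prod.cong) (auto simp: h_def)
  have eq: "g (u \<bullet> b0) * Maxw u = (\<Prod>b\<in>Basis. h b (u \<bullet> b))" for u :: 'a
    unfolding Maxw_eq_prod_std_normal_density prod.remove[OF finite_Basis b0] h_rest
    by (simp add: h_def)
  show "integrable lborel (\<lambda>u::'a. g (u \<bullet> b0) * Maxw u)"
    unfolding eq by (rule lborel_integrable_prod_Basis[OF h_int])
  show "(\<integral>u. g (u \<bullet> b0) * Maxw (u::'a) \<partial>lborel) = (\<integral>x. std_normal_density x * g x \<partial>lborel)"
    unfolding eq lborel_integral_prod_Basis[OF h_int]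
    by (simp add: prod.remove[OF finite_Basis b0] h_rest) (simp add: h_def)
qed

lemma integrable_inner_Maxw: "integrable lborel (\<lambda>u::'a::euclidean_space. (x \<bullet> u) * Maxw u)"
  and integral_inner_Maxw: "(\<integral>u. (x \<bullet> u) * Maxw (u::'a) \<partial>lborel) = 0"
proof -
  have eq: "(x \<bullet> u) * Maxw u = (\<Sum>b\<in>Basis. (x \<bullet> b) * ((u \<bullet> b) * Maxw u))" for u :: 'a
    by (simp add: euclidean_inner[of x u] sum_distrib_left sum_distrib_right mult_ac)
  have int: "integrable lborel (\<lambda>u::'a. (u \<bullet> b) * Maxw u)"
    and zero: "(\<integral>u. (u \<bullet> b) * Maxw (u::'a) \<partial>lborel) = 0" if "b \<in> Basis" for b
    using integrable_coordinate_Maxw[OF that, of "\<lambda>x. x ^ (2 * 0 + 1)"]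
      integral_coordinate_Maxw[OF that, of "\<lambda>x. x ^ (2 * 0 + 1)"] integrable_std_normal_moment[of 1]
      integral_std_normal_moment_odd[of 0] by simp_all
  show "integrable lborel (\<lambda>u::'a. (x \<bullet> u) * Maxw u)"
    unfolding eq by (auto intro!: Bochner_Integration.integrable_sum integrable_mult_right int)
  show "(\<integral>u. (x \<bullet> u) * Maxw (u::'a) \<partial>lborel) = 0"
    unfolding eq by (simp add: Bochner_Integration.integral_sum integrable_mult_right int zero)
qed

lemma integrable_norm_sq_Maxw: "integrable lborel (\<lambda>u::'a::euclidean_space. (norm u)\<^sup>2 * Maxw u)"
  and integral_norm_sq_Maxw: "(\<integral>u. (norm u)\<^sup>2 * Maxw (u::'a) \<partial>lborel) = real DIM('a)"
proof -
  have eq: "(norm u)\<^sup>2 * Maxw u = (\<Sum>b\<in>Basis. (u \<bullet> b)\<^sup>2 * Maxw u)" for u :: 'a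
    unfolding power2_norm_eq_inner euclidean_inner[of u u]
    by (simp add: sum_distrib_right power2_eq_square)
  have int: "integrable lborel (\<lambda>u::'a. (u \<bullet> b)\<^sup>2 * Maxw u)"
    and one: "(\<integral>u. (u \<bullet> b)\<^sup>2 * Maxw (u::'a) \<partial>lborel) = 1" if "b \<in> Basis" for b
    using integrable_coordinate_Maxw[OF that, of "\<lambda>x. x ^ (2 * 1)"]
      integral_coordinate_Maxw[OF that, of "\<lambda>x. x ^ (2 * 1)"] integrable_std_normal_moment[of 2]
      integral_std_normal_moment_even[of 1] by simp_all
  show "integrable lborel (\<lambda>u::'a. (norm u)\<^sup>2 * Maxw u)"
    unfolding eq by (auto intro!: Bochner_Integration.integrable_sum int)
  show "(\<integral>u. (norm u)\<^sup>2 * Maxw (u::'a) \<partial>lborel) = real DIM('a)"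
    unfolding eq by (simp add: Bochner_Integration.integral_sum int one)
qed

lemma nn_integral_affine_Maxw:
  fixes f :: "'a::euclidean_space \<Rightarrow> real"
  assumes f: "\<And>u. 0 \<le> f u" "integrable lborel (\<lambda>u. f u * Maxw u)" and pq: "0 \<le> p" "0 \<le> q"
  shows "(\<integral>\<^sup>+ u. ennreal (p * f u + q) * ennreal (Maxw u) \<partial>lborel)
           = ennreal (p * (\<integral>u. f u * Maxw u \<partial>lborel) + q)"
proof -
  have eq: "(p * f u + q) * Maxw u = p * (f u * Maxw u) + q * Maxw u" for u
    by (simp add: algebra_simps)
  have int: "integrable lborel (\<lambda>u. (p * f u + q) * Maxw u)"
    unfolding eq by (intro Bochner_Integration.integrable_add integrable_mult_right f integrable_Maxw)
  have "(\<integral>\<^sup>+ u. ennreal (p * f u + q) * ennreal (Maxw u) \<partial>lborel)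
      = (\<integral>\<^sup>+ u. ennreal ((p * f u + q) * Maxw u) \<partial>lborel)"
    using f pq by (intro nn_integral_cong) (simp add: ennreal_mult Maxw_nonneg)
  also have "\<dots> = ennreal (\<integral>u. (p * f u + q) * Maxw u \<partial>lborel)"
    using f pq by (intro nn_integral_eq_integral int) (simp add: Maxw_nonneg)
  also have "(\<integral>u. (p * f u + q) * Maxw u \<partial>lborel) = p * (\<integral>u. f u * Maxw u \<partial>lborel) + q"
    unfolding eq
    by (subst Bochner_Integration.integral_add) (auto intro!: integrable_mult_right f integrable_Maxw simp: integral_Maxw)
  finally show ?thesis .
qed

subsection \<open>Mild supersolutions of the dual equation\<close>

(* W dominates the right-hand side of the Duhamel formula whose Picard iterates are the
   Dyson terms defining Pplus. *)
definition mild_supersolution ::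
    "(real \<Rightarrow> 'a \<times> 'a \<Rightarrow> 'a \<times> 'a) \<Rightarrow> ('a::euclidean_space \<times> 'a \<Rightarrow> ennreal) \<Rightarrow> (real \<Rightarrow> 'a \<times> 'a \<Rightarrow> ennreal) \<Rightarrow> bool"
  where "mild_supersolution \<Psi> \<phi> W \<longleftrightarrow> (\<forall>\<tau>\<ge>0. \<forall>z.
     ennreal (exp (- \<tau>)) * \<phi> (\<Psi> \<tau> z)
       + (\<integral>\<^sup>+ s \<in> {0..\<tau>}. ennreal (exp (- s)) *
            (\<integral>\<^sup>+ u. W (\<tau> - s) (fst (\<Psi> s z), u) * ennreal (Maxw u) \<partial>lborel) \<partial>lborel)
     \<le> W \<tau> z)"

lemma dyson_mono:
  assumes "\<And>y. f y \<le> g y"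
  shows "dyson \<Psi> n t f z \<le> dyson \<Psi> n t g z"
  using assms
proof (induction n arbitrary: t z)
  case (Suc n)
  show ?case
    by (simp, intro nn_integral_mono mult_right_mono Suc.IH Suc.prems) simp_all
qed simp

lemma Pplus_mono:
  assumes "\<And>y. f y \<le> g y"
  shows "Pplus \<Psi> t f z \<le> Pplus \<Psi> t g z"
  unfolding Pplus_def
  by (intro mult_left_mono suminf_le[OF _ summableI summableI] dyson_mono assms) simp

lemma sum_dyson_Suc_le:
  "(\<Sum>n<N. dyson \<Psi> (Suc n) t \<phi> z)
     \<le> (\<integral>\<^sup>+ s \<in> {0..t}. (\<integral>\<^sup>+ u. (\<Sum>n<N. dyson \<Psi> n (t - s) \<phi> (fst (\<Psi> s z), u)) * ennreal (Maxw u)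
            \<partial>lborel) \<partial>lborel)"
proof -
  have "(\<Sum>n<N. dyson \<Psi> (Suc n) t \<phi> z)
      \<le> (\<integral>\<^sup>+ s. (\<Sum>n<N. (\<integral>\<^sup>+ u. dyson \<Psi> n (t - s) \<phi> (fst (\<Psi> s z), u) * ennreal (Maxw u) \<partial>lborel)
                            * indicator {0..t} s) \<partial>lborel)"
    unfolding dyson.simps by (rule nn_integral_sum_le) simp
  also have "\<dots> \<le> (\<integral>\<^sup>+ s \<in> {0..t}. (\<integral>\<^sup>+ u. (\<Sum>n<N. dyson \<Psi> n (t - s) \<phi> (fst (\<Psi> s z), u))
      * ennreal (Maxw u) \<partial>lborel) \<partial>lborel)"
    unfolding sum_distrib_right[symmetric]
    by (intro nn_integral_mono mult_right_mono order_trans[OF nn_integral_sum_le])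
      (simp_all add: sum_distrib_right)
  finally show ?thesis .
qed

lemma dyson_partial_sum_le_mild_supersolution:
  assumes W: "mild_supersolution \<Psi> \<phi> W" and "0 \<le> t"
  shows "ennreal (exp (- t)) * (\<Sum>n<N. dyson \<Psi> n t \<phi> z) \<le> W t z"
  using \<open>0 \<le> t\<close>
proof (induction N arbitrary: t z)
  case (Suc N)
  let ?J = "\<lambda>s. \<integral>\<^sup>+ u. (\<Sum>n<N. dyson \<Psi> n (t - s) \<phi> (fst (\<Psi> s z), u)) * ennreal (Maxw u) \<partial>lborel"
  have damped: "ennreal (exp (- t)) * (?J s * indicator {0..t} s)
      \<le> ennreal (exp (- s)) * (\<integral>\<^sup>+ u. W (t - s) (fst (\<Psi> s z), u) * ennreal (Maxw u) \<partial>lborel)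
          * indicator {0..t} s" for s
  proof (cases "s \<in> {0..t}")
    case True
    have "ennreal (exp (- t)) = ennreal (exp (- s)) * ennreal (exp (- (t - s)))"
      by (simp add: ennreal_mult[symmetric] exp_add[symmetric])
    then have "ennreal (exp (- t)) * ?J s = ennreal (exp (- s)) * (ennreal (exp (- (t - s))) * ?J s)"
      by (simp add: mult.assoc)
    also have "\<dots> \<le> ennreal (exp (- s)) * (\<integral>\<^sup>+ u. ennreal (exp (- (t - s)))
        * (\<Sum>n<N. dyson \<Psi> n (t - s) \<phi> (fst (\<Psi> s z), u)) * ennreal (Maxw u) \<partial>lborel)"
      by (intro mult_left_mono order_trans[OF nn_integral_cmult_le]) (simp_all add: mult.assoc)
    also have "\<dots> \<le> ennreal (exp (- s)) * (\<integral>\<^sup>+ u. W (t - s) (fst (\<Psi> s z), u) * ennreal (Maxw u) \<partial>lborel)"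
      using True by (intro mult_left_mono nn_integral_mono mult_right_mono Suc.IH) auto
    finally show ?thesis using True by simp
  qed simp
  have "ennreal (exp (- t)) * (\<Sum>n<Suc N. dyson \<Psi> n t \<phi> z)
      = ennreal (exp (- t)) * \<phi> (\<Psi> t z) + ennreal (exp (- t)) * (\<Sum>n<N. dyson \<Psi> (Suc n) t \<phi> z)"
    by (simp only: sum.lessThan_Suc_shift distrib_left dyson.simps(1))
  also have "\<dots> \<le> ennreal (exp (- t)) * \<phi> (\<Psi> t z)
      + (\<integral>\<^sup>+ s. ennreal (exp (- t)) * (?J s * indicator {0..t} s) \<partial>lborel)"
    by (intro add_left_mono order_trans[OF mult_left_mono[OF sum_dyson_Suc_le] nn_integral_cmult_le]) simp
  also have "\<dots> \<le> ennreal (exp (- t)) * \<phi> (\<Psi> t z) + (\<integral>\<^sup>+ s \<in> {0..t}. ennreal (exp (- s)) *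
      (\<integral>\<^sup>+ u. W (t - s) (fst (\<Psi> s z), u) * ennreal (Maxw u) \<partial>lborel) \<partial>lborel)"
    by (intro add_left_mono nn_integral_mono damped)
  also have "\<dots> \<le> W t z"
    using W Suc.prems unfolding mild_supersolution_def by blast
  finally show ?case .
qed simp

lemma Pplus_le_mild_supersolution:
  assumes "mild_supersolution \<Psi> \<phi> W" and "0 \<le> t"
  shows "Pplus \<Psi> t \<phi> z \<le> W t z"
proof -
  have "Pplus \<Psi> t \<phi> z = (\<Sum>n. ennreal (exp (- t)) * dyson \<Psi> n t \<phi> z)"
    unfolding Pplus_def by simp
  also have "\<dots> \<le> W t z"
    using ennreal_suminf_bound_add[of "\<lambda>n. ennreal (exp (- t)) * dyson \<Psi> n t \<phi> z" 0]
      dyson_partial_sum_le_mild_supersolution[OF assms]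
    by (simp add: sum_distrib_left)
  finally show ?thesis .
qed

subsection \<open>From the generator bound to the semigroup bound\<close>

(* The solution at time t of w' = - lam * w + K with w(0) = y. *)
definition decay_bound :: "real \<Rightarrow> real \<Rightarrow> real \<Rightarrow> real \<Rightarrow> real"
  where "decay_bound lam K t y = exp (- lam * t) * y + K / lam * (1 - exp (- lam * t))"

lemma decay_bound_nonneg:
  assumes "0 < lam" "0 \<le> K" "0 \<le> t" "0 \<le> y"
  shows "0 \<le> decay_bound lam K t y"
  using assms unfolding decay_bound_def by (intro add_nonneg_nonneg mult_nonneg_nonneg) auto

lemma decay_bound_shift_le:
  assumes "0 < lam" "0 \<le> K" "0 \<le> t"
  shows "decay_bound lam (K + lam * m) t (y + m) \<le> exp (- lam * t) * y + (K + lam * m) / lam"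
proof -
  have "decay_bound lam (K + lam * m) t (y + m) = exp (- lam * t) * y + (K + lam * m) / lam
      - K / lam * exp (- lam * t)"
    using assms by (simp add: decay_bound_def field_simps)
  moreover have "0 \<le> K / lam * exp (- lam * t)"
    using assms by simp
  ultimately show ?thesis by linarith
qed

lemma duhamel_comparison:
  fixes a a' b :: "real \<Rightarrow> real"
  assumes lam: "0 < lam" and \<tau>: "0 \<le> \<tau>"
    and a: "\<And>s. s \<in> {0..\<tau>} \<Longrightarrow> (a has_real_derivative a' s) (at s within {0..\<tau>})"
    and ineq: "\<And>s. s \<in> {0..\<tau>} \<Longrightarrow> a' s + b s - a s \<le> - lam * a s + K"
    and b: "continuous_on {0..\<tau>} b"
  shows "exp (- \<tau>) * a \<tau> + integral {0..\<tau>} (\<lambda>s. exp (- s) * decay_bound lam K (\<tau> - s) (b s))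
           \<le> decay_bound lam K \<tau> (a 0)"
proof -
  define G where "G r = exp (- r) * decay_bound lam K (\<tau> - r) (a r)" for r
  define G' where "G' r = exp (- r) * (- decay_bound lam K (\<tau> - r) (a r)
      + exp (- lam * (\<tau> - r)) * (lam * a r + a' r - K))" for r
  have "(G has_vector_derivative G' r) (at r within {0..\<tau>})" if "r \<in> {0..\<tau>}" for r
    unfolding has_real_derivative_iff_has_vector_derivative[symmetric] G_def decay_bound_def
    by (rule derivative_eq_intros a[OF that] refl)+
      (use lam in \<open>simp add: G'_def decay_bound_def field_simps\<close>)
  then have ftc: "(G' has_integral (G \<tau> - G 0)) {0..\<tau>}"
    using \<tau> by (intro fundamental_theorem_of_calculus) auto
  have "exp (- s) * decay_bound lam K (\<tau> - s) (b s) \<le> - G' s" if "s \<in> {0..\<tau>}" for s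
  proof -
    have "0 \<le> exp (- s) * exp (- lam * (\<tau> - s)) * (- lam * a s + K - (a' s + b s - a s))"
      using ineq[OF that] by simp
    then show ?thesis by (simp add: G'_def decay_bound_def algebra_simps)
  qed
  moreover have "(\<lambda>s. exp (- s) * decay_bound lam K (\<tau> - s) (b s)) integrable_on {0..\<tau>}"
    unfolding decay_bound_def by (intro integrable_continuous_interval continuous_intros b)
  ultimately have "integral {0..\<tau>} (\<lambda>s. exp (- s) * decay_bound lam K (\<tau> - s) (b s)) \<le> G 0 - G \<tau>"
    using has_integral_le[OF integrable_integral has_integral_neg[OF ftc]] by simp
  then show ?thesis by (simp add: G_def decay_bound_def)
qed

lemma is_flowD:
  assumes "is_flow gradPhi \<Psi>"
  shows "\<Psi> 0 z = z"
    and "0 \<le> t \<Longrightarrow> ((\<lambda>s. \<Psi> s z) has_vector_derivative (snd (\<Psi> t z), - gradPhi (fst (\<Psi> t z))))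
           (at t within {0..})"
  using assms unfolding is_flow_def by blast+

lemma is_flow_continuous_on:
  assumes "is_flow gradPhi \<Psi>"
  shows "continuous_on {0..} (\<lambda>s. \<Psi> s z)"
  unfolding continuous_on_eq_continuous_within
  using is_flowD(2)[OF assms, of _ z] by (auto intro: has_vector_derivative_continuous)

lemma flow_has_real_derivative:
  assumes flow: "is_flow gradPhi \<Psi>" and diff: "\<phi> differentiable (at (\<Psi> r z))" and r: "0 \<le> r"
  shows "((\<lambda>s. \<phi> (\<Psi> s z)) has_real_derivative Ugen gradPhi \<phi> (\<Psi> r z) - Lstar \<phi> (\<Psi> r z))
           (at r within {0..})"
proof -
  obtain x v where xv: "\<Psi> r z = (x, v)" by fastforce
  have "((\<lambda>s. \<Psi> s z) has_vector_derivative (v, - gradPhi x)) (at r within {0..})"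
    using is_flowD(2)[OF flow r, of z] xv by simp
  moreover have "(\<phi> has_derivative frechet_derivative \<phi> (at (x, v))) (at (\<Psi> r z) within (\<lambda>s. \<Psi> s z) ` {0..})"
    using diff xv by (simp add: frechet_derivative_works has_derivative_at_withinI)
  ultimately have "((\<phi> \<circ> (\<lambda>s. \<Psi> s z)) has_vector_derivative frechet_derivative \<phi> (at (x, v)) (v, - gradPhi x))
      (at r within {0..})"
    by (rule vector_derivative_diff_chain_within)
  then show ?thesis
    by (simp add: xv Ugen_def o_def has_real_derivative_iff_has_vector_derivative)
qed

lemma set_nn_integral_decay_bound_Maxw:
  fixes \<phi> :: "'a::euclidean_space \<times> 'a \<Rightarrow> real" and p :: "real \<Rightarrow> 'a"
  assumes nonneg: "\<And>z. 0 \<le> \<phi> z" and int: "\<And>x. integrable lborel (\<lambda>u. \<phi> (x, u) * Maxw u)"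
    and cont: "continuous_on {0..\<tau>} (\<lambda>s. \<integral>u. \<phi> (p s, u) * Maxw u \<partial>lborel)"
    and lam: "0 < lam" and K: "0 \<le> K"
  defines "H \<equiv> \<lambda>s. exp (- s) * decay_bound lam K (\<tau> - s) (\<integral>u. \<phi> (p s, u) * Maxw u \<partial>lborel)"
  shows "(\<integral>\<^sup>+ s \<in> {0..\<tau>}. ennreal (exp (- s)) *
            (\<integral>\<^sup>+ u. ennreal (decay_bound lam K (\<tau> - s) (\<phi> (p s, u))) * ennreal (Maxw u) \<partial>lborel) \<partial>lborel)
           = ennreal (integral {0..\<tau>} H)"
    and "0 \<le> integral {0..\<tau>} H"
proof -
  have H_nonneg: "0 \<le> H s" if "s \<in> {0..\<tau>}" for s
    using that lam K nonneg by (simp add: H_def decay_bound_nonneg Maxw_nonneg)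
  have H_int: "H integrable_on {0..\<tau>}"
    unfolding H_def decay_bound_def by (intro integrable_continuous_interval continuous_intros cont)
  have "(\<integral>\<^sup>+ u. ennreal (decay_bound lam K (\<tau> - s) (\<phi> (p s, u))) * ennreal (Maxw u) \<partial>lborel)
      = ennreal (decay_bound lam K (\<tau> - s) (\<integral>u. \<phi> (p s, u) * Maxw u \<partial>lborel))" if "s \<in> {0..\<tau>}" for s
    unfolding decay_bound_def
    using that lam K by (intro nn_integral_affine_Maxw nonneg int mult_nonneg_nonneg) auto
  then have "(\<integral>\<^sup>+ s \<in> {0..\<tau>}. ennreal (exp (- s)) *
      (\<integral>\<^sup>+ u. ennreal (decay_bound lam K (\<tau> - s) (\<phi> (p s, u))) * ennreal (Maxw u) \<partial>lborel) \<partial>lborel)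
      = (\<integral>\<^sup>+ s \<in> {0..\<tau>}. ennreal (H s) \<partial>lborel)"
    by (intro nn_integral_cong) (simp add: H_def ennreal_mult' split: split_indicator)
  also have "\<dots> = ennreal (integral {0..\<tau>} H)"
    using H_nonneg H_int by (intro nn_integral_has_integral_lebesgue' integrable_integral) auto
  finally show "(\<integral>\<^sup>+ s \<in> {0..\<tau>}. ennreal (exp (- s)) *
      (\<integral>\<^sup>+ u. ennreal (decay_bound lam K (\<tau> - s) (\<phi> (p s, u))) * ennreal (Maxw u) \<partial>lborel) \<partial>lborel)
      = ennreal (integral {0..\<tau>} H)" .
  show "0 \<le> integral {0..\<tau>} H"
    using H_nonneg H_int by (intro integral_nonneg) auto
qed

lemma mild_supersolution_decay_bound:
  fixes \<phi> :: "'a::euclidean_space \<times> 'a \<Rightarrow> real"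
  assumes flow: "is_flow gradPhi \<Psi>"
    and diff: "\<And>z. \<phi> differentiable (at z)" and nonneg: "\<And>z. 0 \<le> \<phi> z"
    and int: "\<And>x. integrable lborel (\<lambda>u. \<phi> (x, u) * Maxw u)"
    and cont: "continuous_on UNIV (\<lambda>x. \<integral>u. \<phi> (x, u) * Maxw u \<partial>lborel)"
    and gen: "\<And>z. Ugen gradPhi \<phi> z \<le> - lam * \<phi> z + K"
    and lam: "0 < lam" and K: "0 \<le> K"
  shows "mild_supersolution \<Psi> (\<lambda>y. ennreal (\<phi> y)) (\<lambda>\<tau> y. ennreal (decay_bound lam K \<tau> (\<phi> y)))"
  unfolding mild_supersolution_def
proof (intro allI impI)
  fix \<tau> :: real and z :: "'a \<times> 'a" assume \<tau>: "0 \<le> \<tau>"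
  let ?avg = "\<lambda>s. \<integral>u. \<phi> (fst (\<Psi> s z), u) * Maxw u \<partial>lborel"
  have avg_cont: "continuous_on {0..\<tau>} ?avg"
    by (intro continuous_on_compose2[OF cont] continuous_intros
        continuous_on_subset[OF is_flow_continuous_on[OF flow]]) auto
  note jumps = set_nn_integral_decay_bound_Maxw[OF nonneg int avg_cont lam K]
  have "exp (- \<tau>) * \<phi> (\<Psi> \<tau> z) + integral {0..\<tau>} (\<lambda>s. exp (- s) * decay_bound lam K (\<tau> - s) (?avg s))
      \<le> decay_bound lam K \<tau> (\<phi> (\<Psi> 0 z))"
  proof (rule duhamel_comparison[OF lam \<tau> _ _ avg_cont])
    fix s assume s: "s \<in> {0..\<tau>}"
    show "((\<lambda>s. \<phi> (\<Psi> s z)) has_real_derivative Ugen gradPhi \<phi> (\<Psi> s z) - Lstar \<phi> (\<Psi> s z))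
        (at s within {0..\<tau>})"
      using flow_has_real_derivative[OF flow diff, of s z] s by (auto intro: has_field_derivative_subset)
    show "Ugen gradPhi \<phi> (\<Psi> s z) - Lstar \<phi> (\<Psi> s z) + ?avg s - \<phi> (\<Psi> s z) \<le> - lam * \<phi> (\<Psi> s z) + K"
      using gen[of "\<Psi> s z"] by (simp add: Lstar_def split_beta)
  qed
  then show "ennreal (exp (- \<tau>)) * ennreal (\<phi> (\<Psi> \<tau> z)) + (\<integral>\<^sup>+ s \<in> {0..\<tau>}. ennreal (exp (- s)) *
      (\<integral>\<^sup>+ u. ennreal (decay_bound lam K (\<tau> - s) (\<phi> (fst (\<Psi> s z), u))) * ennreal (Maxw u) \<partial>lborel) \<partial>lborel)
      \<le> ennreal (decay_bound lam K \<tau> (\<phi> z))"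
    unfolding jumps(1) using jumps(2) is_flowD(1)[OF flow] nonneg
    by (simp add: ennreal_mult[symmetric] ennreal_plus[symmetric] ennreal_leI del: ennreal_plus)
qed

theorem Pplus_le_decay_bound:
  fixes \<phi> :: "'a::euclidean_space \<times> 'a \<Rightarrow> real"
  assumes "is_flow gradPhi \<Psi>"
    and "\<And>z. \<phi> differentiable (at z)" and "\<And>z. 0 \<le> \<phi> z"
    and "\<And>x. integrable lborel (\<lambda>u. \<phi> (x, u) * Maxw u)"
    and "continuous_on UNIV (\<lambda>x. \<integral>u. \<phi> (x, u) * Maxw u \<partial>lborel)"
    and "\<And>z. Ugen gradPhi \<phi> z \<le> - lam * \<phi> z + K"
    and "0 < lam" and "0 \<le> K" and t: "0 \<le> t"
  shows "Pplus \<Psi> t (\<lambda>y. ennreal (\<phi> y)) z \<le> ennreal (decay_bound lam K t (\<phi> z))"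
  using Pplus_le_mild_supersolution[OF mild_supersolution_decay_bound[OF assms(1-8)] t] .

lemma Pdual_le_of_shifted_Pplus_le:
  assumes m: "0 \<le> m"
    and bound: "Pplus \<Psi> t (\<lambda>y. ennreal (\<phi> y + m)) z \<le> ennreal B" and B: "0 \<le> B"
  shows "Pplus \<Psi> t (\<lambda>y. ennreal (\<phi> y)) z \<noteq> \<infinity>" and "Pdual \<Psi> t \<phi> z \<le> B"
proof -
  have "Pplus \<Psi> t (\<lambda>y. ennreal (\<phi> y)) z \<le> Pplus \<Psi> t (\<lambda>y. ennreal (\<phi> y + m)) z"
    using m by (intro Pplus_mono ennreal_leI) simp
  then have le: "Pplus \<Psi> t (\<lambda>y. ennreal (\<phi> y)) z \<le> ennreal B"
    using bound by (rule order_trans)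
  then show "Pplus \<Psi> t (\<lambda>y. ennreal (\<phi> y)) z \<noteq> \<infinity>"
    by (metis ennreal_less_top infinity_ennreal_def leD)
  have "Pdual \<Psi> t \<phi> z \<le> enn2real (Pplus \<Psi> t (\<lambda>y. ennreal (\<phi> y)) z)"
    unfolding Pdual_def by simp
  also have "\<dots> \<le> B"
    by (rule enn2real_leI[OF B le])
  finally show "Pdual \<Psi> t \<phi> z \<le> B" .
qed

subsection \<open>The kinetic Lyapunov function\<close>

definition lyapunov :: "('a::real_inner \<Rightarrow> real) \<Rightarrow> 'a \<times> 'a \<Rightarrow> real" where
  "lyapunov Phi z = 1 + Phi (fst z) + (norm (snd z))\<^sup>2 / 2 + (fst z \<bullet> snd z) / 4 + (norm (fst z))\<^sup>2 / 8"

lemma abs_inner_le_half_norms: "\<bar>x \<bullet> v\<bar> \<le> ((norm x)\<^sup>2 + (norm (v::'a::real_inner))\<^sup>2) / 2"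
proof -
  have "\<bar>x \<bullet> v\<bar> \<le> norm x * norm v" by (rule Cauchy_Schwarz_ineq2)
  moreover have "0 \<le> (norm x - norm v)\<^sup>2" by simp
  ultimately show ?thesis by (simp add: power2_eq_square algebra_simps)
qed

lemma one_plus_Phi_le_lyapunov: "1 + Phi (fst z) \<le> lyapunov Phi z"
  using order_trans[OF abs_ge_minus_self abs_inner_le_half_norms, of "fst z" "snd z"]
    zero_le_power2[of "norm (snd z)"]
  unfolding lyapunov_def by argo

lemma lyapunov_has_derivative:
  assumes "(Phi has_derivative (\<lambda>h. g \<bullet> h)) (at x)"
  shows "((\<lambda>z. lyapunov Phi z + c) has_derivative
      (\<lambda>(h, k). g \<bullet> h + v \<bullet> k + (h \<bullet> v + x \<bullet> k) / 4 + (x \<bullet> h) / 4)) (at (x, v))"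
proof -
  have "(Phi has_derivative (\<lambda>h. g \<bullet> h)) (at (fst (x, v)))"
    using assms by simp
  then have Phi: "((\<lambda>z. Phi (fst z)) has_derivative (\<lambda>z. g \<bullet> fst z)) (at (x, v))"
    by (rule has_derivative_compose[OF has_derivative_fst[OF has_derivative_ident]])
  have eq: "(\<lambda>z. lyapunov Phi z + c) = (\<lambda>z. 1 + Phi (fst z) + (1/2) * (snd z \<bullet> snd z)
      + (1/4) * (fst z \<bullet> snd z) + (1/8) * (fst z \<bullet> fst z) + c)"
    by (auto simp: lyapunov_def power2_norm_eq_inner)
  show ?thesis
    unfolding eq by (auto intro!: derivative_eq_intros Phi simp: algebra_simps inner_commute fun_eq_iff)
qed

lemma integrable_lyapunov_Maxw:
  "integrable lborel (\<lambda>u. (lyapunov Phi (x, u) + c) * Maxw (u::'a::euclidean_space))"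
  and integral_lyapunov_Maxw:
  "(\<integral>u. (lyapunov Phi (x, u) + c) * Maxw (u::'a) \<partial>lborel)
     = 1 + Phi x + real DIM('a) / 2 + (norm x)\<^sup>2 / 8 + c"
proof -
  have eq: "(lyapunov Phi (x, u) + c) * Maxw u = (1 + Phi x + (norm x)\<^sup>2 / 8 + c) * Maxw u
      + (1/2) * ((norm u)\<^sup>2 * Maxw u) + (1/4) * ((x \<bullet> u) * Maxw u)" for u
    by (simp add: lyapunov_def algebra_simps)
  note int = integrable_Maxw integrable_norm_sq_Maxw integrable_inner_Maxw
  show "integrable lborel (\<lambda>u. (lyapunov Phi (x, u) + c) * Maxw (u::'a::euclidean_space))"
    unfolding eq by (intro Bochner_Integration.integrable_add integrable_mult_right int)
  show "(\<integral>u. (lyapunov Phi (x, u) + c) * Maxw (u::'a) \<partial>lborel)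
      = 1 + Phi x + real DIM('a) / 2 + (norm x)\<^sup>2 / 8 + c"
    unfolding eq
    by (simp add: int Bochner_Integration.integral_add integral_Maxw integral_norm_sq_Maxw integral_inner_Maxw)
qed

lemma Ugen_lyapunov:
  fixes x :: "'a::euclidean_space"
  assumes grad: "\<And>x. (Phi has_derivative (\<lambda>h. gradPhi x \<bullet> h)) (at x)"
  shows "Ugen gradPhi (\<lambda>z. lyapunov Phi z + c) (x, v)
           = real DIM('a) / 2 - (norm v)\<^sup>2 / 4 - (x \<bullet> gradPhi x) / 4"
proof -
  have transport: "frechet_derivative (\<lambda>z. lyapunov Phi z + c) (at (x, v)) (v, - gradPhi x)
      = (v \<bullet> v - x \<bullet> gradPhi x + x \<bullet> v) / 4"
    unfolding frechet_derivative_at[OF lyapunov_has_derivative[OF grad[of x], of c v], symmetric]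
    by (simp add: inner_commute algebra_simps add_divide_distrib)
  have collision: "Lstar (\<lambda>z. lyapunov Phi z + c) (x, v)
      = 1 + Phi x + real DIM('a) / 2 + (norm x)\<^sup>2 / 8 - lyapunov Phi (x, v)"
    by (simp add: Lstar_def integral_lyapunov_Maxw)
  have "Ugen gradPhi (\<lambda>z. lyapunov Phi z + c) (x, v)
      = frechet_derivative (\<lambda>z. lyapunov Phi z + c) (at (x, v)) (v, - gradPhi x)
        + Lstar (\<lambda>z. lyapunov Phi z + c) (x, v)"
    by (simp add: Ugen_def)
  also have "\<dots> = real DIM('a) / 2 - (norm v)\<^sup>2 / 4 - (x \<bullet> gradPhi x) / 4"
    unfolding transport collision
    by (simp add: lyapunov_def power2_norm_eq_inner algebra_simps add_divide_distrib diff_divide_distrib)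
  finally show ?thesis .
qed

lemma Ugen_lyapunov_le:
  fixes Phi :: "'a::euclidean_space \<Rightarrow> real"
  assumes grad: "\<And>x. (Phi has_derivative (\<lambda>h. gradPhi x \<bullet> h)) (at x)"
    and drift: "\<And>x. \<gamma>1 * (norm x)\<^sup>2 + \<gamma>2 * Phi x - A \<le> x \<bullet> gradPhi x"
    and \<gamma>: "0 < \<gamma>1" "0 < \<gamma>2" and m: "\<And>x. - m \<le> Phi x" "0 \<le> m"
  shows "Ugen gradPhi (\<lambda>z. lyapunov Phi z + c) z
           \<le> - min (min \<gamma>1 (\<gamma>2 / 4)) (1 / 4) * lyapunov Phi z + (real DIM('a) / 2 + A / 4 + 1 + \<gamma>2 * m)"
proof (cases z)
  case (Pair x v)
  define lam where "lam = min (min \<gamma>1 (\<gamma>2 / 4)) (1 / 4)"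
  have lam: "0 < lam" "lam \<le> \<gamma>1" "lam \<le> \<gamma>2 / 4" "lam \<le> 1 / 4"
    using \<gamma> by (auto simp: lam_def)
  have "x \<bullet> v \<le> ((norm x)\<^sup>2 + (norm v)\<^sup>2) / 2"
    using abs_inner_le_half_norms[of x v] by linarith
  from mult_left_mono[OF this, of lam]
  have "lam * (x \<bullet> v) \<le> lam * (norm x)\<^sup>2 / 2 + lam * (norm v)\<^sup>2 / 2"
    using lam by (simp add: algebra_simps)
  moreover have "lam * Phi x \<le> \<gamma>2 * Phi x / 4 + \<gamma>2 * m / 4 - lam * m"
    using mult_right_mono[OF lam(3), of "Phi x + m"] m(1)[of x] by (simp add: algebra_simps)
  moreover have "lam * (norm x)\<^sup>2 \<le> \<gamma>1 * (norm x)\<^sup>2" "lam * (norm v)\<^sup>2 \<le> (norm v)\<^sup>2 / 4"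
    using mult_right_mono[OF lam(2)] mult_right_mono[OF lam(4)] by simp_all
  moreover have "0 \<le> (norm v)\<^sup>2" "0 \<le> lam * (norm v)\<^sup>2" "0 \<le> lam * m" "0 \<le> \<gamma>2 * m"
    using lam m \<gamma> by simp_all
  moreover have "- lam * lyapunov Phi (x, v) = - lam - lam * Phi x - lam * (norm v)\<^sup>2 / 2
      - lam * (x \<bullet> v) / 4 - lam * (norm x)\<^sup>2 / 8"
    by (simp add: lyapunov_def algebra_simps)
  ultimately show ?thesis
    using drift[of x] lam unfolding Pair Ugen_lyapunov[OF grad] lam_def[symmetric] by linarith
qed

lemma Pdual_lyapunov_le:
  fixes Phi :: "'a::euclidean_space \<Rightarrow> real"
  assumes flow: "is_flow gradPhi \<Psi>"
    and grad: "\<And>x. (Phi has_derivative (\<lambda>h. gradPhi x \<bullet> h)) (at x)"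
    and m: "\<And>x. - m \<le> Phi x" "0 \<le> m"
    and gen: "\<And>z. Ugen gradPhi (\<lambda>z. lyapunov Phi z + m) z \<le> - lam * lyapunov Phi z + K"
    and lam: "0 < lam" and K: "0 \<le> K" and t: "0 \<le> t"
  shows "Pplus \<Psi> t (\<lambda>y. ennreal (lyapunov Phi y)) z \<noteq> \<infinity>"
    and "Pdual \<Psi> t (lyapunov Phi) z \<le> exp (- lam * t) * lyapunov Phi z + (K + lam * m) / lam"
proof -
  have nonneg: "0 \<le> lyapunov Phi y + m" for y
    using one_plus_Phi_le_lyapunov[of Phi y] m(1)[of "fst y"] by linarith
  have K': "0 \<le> K + lam * m"
    using lam K m by simp
  have "Pplus \<Psi> t (\<lambda>y. ennreal (lyapunov Phi y + m)) z
      \<le> ennreal (decay_bound lam (K + lam * m) t (lyapunov Phi z + m))"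
  proof (rule Pplus_le_decay_bound[OF flow _ nonneg _ _ _ lam K' t])
    show "(\<lambda>z. lyapunov Phi z + m) differentiable (at z)" for z
      using lyapunov_has_derivative[OF grad] by (cases z) (auto intro: differentiableI)
    show "integrable lborel (\<lambda>u. (lyapunov Phi (x, u) + m) * Maxw u)" for x
      by (rule integrable_lyapunov_Maxw)
    have "continuous_on UNIV Phi"
      using grad by (intro has_derivative_continuous_on) auto
    then show "continuous_on UNIV (\<lambda>x. \<integral>u. (lyapunov Phi (x, u) + m) * Maxw u \<partial>lborel)"
      unfolding integral_lyapunov_Maxw by (intro continuous_intros) auto
    show "Ugen gradPhi (\<lambda>z. lyapunov Phi z + m) z \<le> - lam * (lyapunov Phi z + m) + (K + lam * m)" for z
      using gen[of z] by (simp add: algebra_simps)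
  qed
  moreover have "0 \<le> decay_bound lam (K + lam * m) t (lyapunov Phi z + m)"
    using nonneg lam K' t by (intro decay_bound_nonneg)
  ultimately have "Pplus \<Psi> t (\<lambda>y. ennreal (lyapunov Phi y)) z \<noteq> \<infinity>"
    and "Pdual \<Psi> t (lyapunov Phi) z \<le> decay_bound lam (K + lam * m) t (lyapunov Phi z + m)"
    by (rule Pdual_le_of_shifted_Pplus_le[OF m(2)])+
  then show "Pplus \<Psi> t (\<lambda>y. ennreal (lyapunov Phi y)) z \<noteq> \<infinity>"
    and "Pdual \<Psi> t (lyapunov Phi) z \<le> exp (- lam * t) * lyapunov Phi z + (K + lam * m) / lam"
    using decay_bound_shift_le[OF lam K t, of m "lyapunov Phi z"] by auto
qed

theorem mainTheorem11:
  fixes Phi :: "'a::euclidean_space \<Rightarrow> real" and gradPhi :: "'a \<Rightarrow> 'a"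
    and HessPhi :: "'a \<Rightarrow> 'a \<Rightarrow>\<^sub>L 'a" and \<gamma>1 \<gamma>2 A :: real
    and V :: "'a \<times> 'a \<Rightarrow> real"
  assumes grad: "\<forall>x. (Phi has_derivative (\<lambda>h. gradPhi x \<bullet> h)) (at x)"
    and hess: "\<forall>x. (gradPhi has_derivative blinfun_apply (HessPhi x)) (at x)"
    and hess_cont: "continuous_on UNIV HessPhi"
    and bdd: "bdd_below (range Phi)"
    and pos: "\<gamma>1 > 0" "\<gamma>2 > 0" "A > 0"
    and drift: "\<forall>x. x \<bullet> gradPhi x \<ge> \<gamma>1 * (norm x) ^ 2 + \<gamma>2 * Phi x - A"
    and V_def: "V = (\<lambda>(x, v). 1 + Phi x + (norm v) ^ 2 / 2 + (x \<bullet> v) / 4 + (norm x) ^ 2 / 8)"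
  shows "\<exists>lam>0. \<exists>K\<ge>0.
           (\<forall>z. Ugen gradPhi V z \<le> - lam * V z + K) \<and>
           (\<forall>\<Psi>. is_flow gradPhi \<Psi> \<longrightarrow>
              (\<forall>t>0. \<forall>z. Pplus \<Psi> t (\<lambda>y. ennreal (V y)) z \<noteq> \<infinity> \<and>
                         Pdual \<Psi> t V z \<le> exp (- lam * t) * V z + K / lam))"
proof -
  (* hess and hess_cont only guarantee that the flow exists; the statement quantifies over flows. *)
  obtain b where b: "\<And>x. b \<le> Phi x"
    using bdd by (auto simp: bdd_below_def)
  define m where "m = - min b 0"
  have m: "\<And>x. - m \<le> Phi x" "0 \<le> m"
    using b by (auto simp: m_def min.coboundedI1)
  define lam where "lam = min (min \<gamma>1 (\<gamma>2 / 4)) (1 / 4)"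
  define K where "K = real DIM('a) / 2 + A / 4 + 1 + \<gamma>2 * m"
  have lam: "0 < lam" and K: "0 \<le> K"
    using pos m by (simp_all add: lam_def K_def)
  have V: "V = lyapunov Phi"
    by (simp add: V_def lyapunov_def fun_eq_iff split_beta)
  have gen: "Ugen gradPhi (\<lambda>z. lyapunov Phi z + c) z \<le> - lam * lyapunov Phi z + K" for c z
    unfolding lam_def K_def using grad[rule_format] drift[rule_format] pos(1,2) m by (rule Ugen_lyapunov_le)
  have "Ugen gradPhi V z \<le> - lam * V z + (K + lam * m)" for z
  proof -
    have "Ugen gradPhi V z \<le> - lam * V z + K"
      using gen[of 0 z] by (simp add: V)
    moreover have "0 \<le> lam * m"
      using lam m by simp
    ultimately show ?thesis by linarith
  qed
  moreover have "Pplus \<Psi> t (\<lambda>y. ennreal (V y)) z \<noteq> \<infinity> \<and>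
      Pdual \<Psi> t V z \<le> exp (- lam * t) * V z + (K + lam * m) / lam"
    if "is_flow gradPhi \<Psi>" and "0 < t" for \<Psi> t z
    using Pdual_lyapunov_le[OF that(1) grad[rule_format] m gen lam K] that(2) by (simp add: V)
  moreover have "0 \<le> K + lam * m"
    using lam K m by simp
  ultimately show ?thesis
    using lam by blast
qed

end
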